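(* Let $h\ge1$ and $n$ be positive integers, and let $\phi:\mathbb{R}^n\to\mathbb{R}$ be a $(Q,R)$-bounded function whose Taylor series at $0$ has radius of convergence at least $\nu>0$. Let $L=(L^{(1)},\dots,L^{(T)})$ be a sequence of vectors in $\mathbb{R}^n$ with $\|L^{(t)}\|_\infty\le\nu$ for all $t\in[T]$. Suppose that for some $\alpha\in(0,1)$, $B_1\ge2e^2R$ and $B_0\ge3$, for each $0\le h'\le h$ and each $t\in[T-h']$ we have $\|(D_{h'}L)^{(t)}\|_\infty\le\frac1{B_1}\alpha^{h'}(h')^{B_0h'}$ (with $0^0:=1$). Then for all $t\in[T-h]$, $$\big|(D_h(\phi\circ L))^{(t)}\big|\le\frac{12RQe^2}{B_1}\cdot\alpha^h\cdot h^{B_0h+1},$$ where $\phi\circ L$ is the scalar sequence $(\phi(L^{(1)}),\dots,\phi(L^{(T)}))$.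
   Context: Finite differences: $(D_0L)^{(t)}=L^{(t)}$ and $(D_hL)^{(t)}=(D_{h-1}L)^{(t+1)}-(D_{h-1}L)^{(t)}$ for $1\le t\le T-h$. A function $\phi:\mathbb{R}^n\to\mathbb{R}$, real-analytic near the origin with Taylor series $\sum_{\gamma\in\mathbb{Z}_{\ge0}^n}a_\gamma z^\gamma$ at $0$ (with $z^\gamma=z_1^{\gamma_1}\cdots z_n^{\gamma_n}$, $|\gamma|=\gamma_1+\dots+\gamma_n$), is called $(Q,R)$-bounded if $\sum_{|\gamma|=k}|a_\gamma|\le Q R^k$ for every integer $k\ge0$. *)

theory Defs
  imports "HOL-Analysis.Analysis"
begin

text \<open>Finite differences of a sequence indexed by nat (the paper's indices are 1..T).\<close>
fun fdiff :: "nat \<Rightarrow> (nat \<Rightarrow> 'a::ab_group_add) \<Rightarrow> nat \<Rightarrow> 'a" where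
  "fdiff 0 L t = L t"
| "fdiff (Suc h) L t = fdiff h L (t + 1) - fdiff h L t"

definition monomial :: "real^'n \<Rightarrow> ('n \<Rightarrow> nat) \<Rightarrow> real" where
  "monomial z \<gamma> = (\<Prod>i\<in>UNIV. (z $ i) ^ (\<gamma> i))"

definition QR_bounded_coeffs :: "(('n::finite \<Rightarrow> nat) \<Rightarrow> real) \<Rightarrow> real \<Rightarrow> real \<Rightarrow> bool" where
  "QR_bounded_coeffs a Q R \<longleftrightarrow>
     (\<forall>k::nat. (\<Sum>\<gamma>\<in>{\<gamma>. sum \<gamma> UNIV = k}. \<bar>a \<gamma>\<bar>) \<le> Q * R ^ k)"

definition power_series_on :: "(real^'n \<Rightarrow> real) \<Rightarrow> (('n \<Rightarrow> nat) \<Rightarrow> real) \<Rightarrow> real \<Rightarrow> bool" where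
  "power_series_on \<phi> a \<nu> \<longleftrightarrow>
     (\<forall>z. infnorm z \<le> \<nu> \<longrightarrow> ((\<lambda>\<gamma>. a \<gamma> * monomial z \<gamma>) has_sum \<phi> z) UNIV)"

definition pw0 :: "nat \<Rightarrow> real \<Rightarrow> real" where
  "pw0 h B0 = (if h = 0 then 1 else real h powr (B0 * real h))"

end

theory Submission
  imports Defs
begin

(* Expanding phi into its Taylor series commutes with finite differences, so
   D_h (phi o L) = sum_gamma a_gamma D_h (L^gamma). By the discrete Leibniz rule and the
   convolution inequality sum_i (m choose i) i^(B0 i) (m-i)^(B0 (m-i)) <= 3 m^(B0 m),
   sequences whose m-th differences are bounded by K alpha^m m^(B0 m) for all m <= h are
   closed under products, at the cost of multiplying the constants and a factor 3. Hence
   D_h of a monomial of degree k >= 1 in the coordinates of L is at most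
   (3/B1)^k alpha^h h^(B0 h), and summing against the coefficient bound Q R^k gives a
   geometric series of ratio 3R/B1 <= 1/2. This yields the bound 6RQ/B1 alpha^h h^(B0 h),
   which is stronger than the one claimed. *)

lemma fdiff_const: "fdiff h (\<lambda>_. k) t = (if h = 0 then k else 0)"
  by (induction h arbitrary: t) auto

lemma fdiff_vec_nth: "fdiff h (\<lambda>s. L s $ j) t = fdiff h L t $ j"
  by (induction h arbitrary: t) auto

lemma fdiff_cmult:
  fixes f :: "nat \<Rightarrow> 'a::ring"
  shows "fdiff h (\<lambda>s. c * f s) t = c * fdiff h f t"
  by (induction h arbitrary: t) (auto simp: right_diff_distrib)

lemma sum_choose_Suc_split:
  fixes X :: "nat \<Rightarrow> 'a::comm_semiring_1"
  shows "(\<Sum>i\<le>Suc m. of_nat (Suc m choose i) * X i) =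
    (\<Sum>i\<le>m. of_nat (m choose i) * X (Suc i)) + (\<Sum>i\<le>m. of_nat (m choose i) * X i)"
proof -
  have "(\<Sum>i\<le>m. of_nat (m choose i) * X i) = X 0 + (\<Sum>i\<le>m. of_nat (m choose Suc i) * X (Suc i))"
    using sum.atMost_Suc_shift[of "\<lambda>i. of_nat (m choose i) * X i" m] by (simp add: binomial_eq_0)
  then show ?thesis
    by (simp add: sum.atMost_Suc_shift sum.distrib algebra_simps del: sum.atMost_Suc)
qed

lemma fdiff_mult:
  fixes f g :: "nat \<Rightarrow> 'a::comm_ring_1"
  shows "fdiff m (\<lambda>s. f s * g s) t =
    (\<Sum>i\<le>m. of_nat (m choose i) * (fdiff i f t * fdiff (m - i) g (t + i)))"
proof (induction m arbitrary: t)
  case 0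
  then show ?case by simp
next
  case (Suc m)
  have step: "fdiff i f (t + 1) * fdiff (m - i) g (t + 1 + i) - fdiff i f t * fdiff (m - i) g (t + i)
      = fdiff (Suc i) f t * fdiff (m - i) g (t + Suc i) + fdiff i f t * fdiff (Suc m - i) g (t + i)"
    if "i \<le> m" for i
    using that by (simp add: Suc_diff_le algebra_simps)
  have "fdiff (Suc m) (\<lambda>s. f s * g s) t =
      (\<Sum>i\<le>m. of_nat (m choose i) * (fdiff i f (t + 1) * fdiff (m - i) g (t + 1 + i)
        - fdiff i f t * fdiff (m - i) g (t + i)))"
    by (simp add: Suc.IH sum_subtractf right_diff_distrib)
  also have "\<dots> = (\<Sum>i\<le>m. of_nat (m choose i) * (fdiff (Suc i) f t * fdiff (m - i) g (t + Suc i)))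
      + (\<Sum>i\<le>m. of_nat (m choose i) * (fdiff i f t * fdiff (Suc m - i) g (t + i)))"
    unfolding sum.distrib[symmetric] distrib_left[symmetric]
    by (rule sum.cong[OF refl]) (simp only: step atMost_iff)
  also have "\<dots> = (\<Sum>i\<le>Suc m. of_nat (Suc m choose i) * (fdiff i f t * fdiff (Suc m - i) g (t + i)))"
    by (simp only: sum_choose_Suc_split) simp
  finally show ?case .
qed

lemma fdiff_has_sum:
  fixes f :: "'a \<Rightarrow> nat \<Rightarrow> 'b::topological_ab_group_add"
  assumes "\<And>s. t \<le> s \<Longrightarrow> s \<le> t + h \<Longrightarrow> ((\<lambda>x. f x s) has_sum g s) A"
  shows "((\<lambda>x. fdiff h (f x) t) has_sum fdiff h g t) A"
  using assms
proof (induction h arbitrary: t)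
  case 0
  then show ?case by simp
next
  case (Suc h)
  have "((\<lambda>x. fdiff h (f x) (t + 1)) has_sum fdiff h g (t + 1)) A"
    by (rule Suc.IH, rule Suc.prems) auto
  moreover have "((\<lambda>x. - fdiff h (f x) t) has_sum - fdiff h g t) A"
    unfolding has_sum_uminus by (simp, rule Suc.IH, rule Suc.prems) auto
  ultimately show ?case
    using has_sum_add by fastforce
qed

lemma has_sum_abs_le_finite_sums:
  fixes f :: "'a \<Rightarrow> real"
  assumes "(f has_sum S) A" and "\<And>F. finite F \<Longrightarrow> F \<subseteq> A \<Longrightarrow> (\<Sum>x\<in>F. \<bar>f x\<bar>) \<le> B"
  shows "\<bar>S\<bar> \<le> B"
proof -
  have "S \<le> B"
    using assms(1) by (rule has_sum_le_finite_sums) (smt (verit) assms(2) sum_mono abs_ge_self)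
  moreover have "- S \<le> B"
  proof -
    have "((\<lambda>x. - f x) has_sum - S) A" using assms(1) by (simp add: has_sum_uminus)
    then show ?thesis by (rule has_sum_le_finite_sums) (smt (verit) assms(2) sum_mono abs_ge_minus_self)
  qed
  ultimately show ?thesis by linarith
qed

lemma choose_mult_powers_le:
  "real ((i + j) choose i) * (real i ^ i * real j ^ j) \<le> real (i + j) ^ (i + j)"
proof -
  have "real (i + j) ^ (i + j) = (\<Sum>k\<le>i + j. real ((i + j) choose k) * real i ^ k * real j ^ (i + j - k))"
    using binomial_ring[of "real i" "real j" "i + j"] by simp
  also have "\<dots> \<ge> real ((i + j) choose i) * real i ^ i * real j ^ (i + j - i)"
    by (rule member_le_sum) auto
  finally show ?thesis by (simp add: mult.assoc)
qed

lemma pw0_nonneg: "pw0 i B0 \<ge> 0"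
  by (simp add: pw0_def)

lemma pw0_eq_powr: "i \<ge> 1 \<Longrightarrow> pw0 i B0 = (real i ^ i) powr B0"
  by (simp add: pw0_def powr_realpow[symmetric] powr_powr mult.commute)

lemma choose_mult_pw0_le:
  assumes B0: "B0 \<ge> 2" and i: "1 \<le> i" "i < m"
  shows "real (m choose i) * pw0 i B0 * pw0 (m - i) B0 \<le> pw0 m B0 / real m"
proof -
  define j where "j = m - i"
  have m: "m = i + j" "j \<ge> 1" using i by (auto simp: j_def)
  define C where "C = real (m choose i)"
  define P where "P = real i ^ i * real j ^ j"
  define M where "M = real m ^ m"
  have Cm: "C \<ge> real m" unfolding C_def using upper_le_binomial[of i m] i by simp
  have C1: "C \<ge> 1" using Cm i by simp
  have "1 * 1 \<le> real i ^ i * real j ^ j" using m i by (intro mult_mono one_le_power) auto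
  then have P1: "P \<ge> 1" by (simp add: P_def)
  have CP: "C * P \<le> M" unfolding C_def P_def M_def m using choose_mult_powers_le by simp
  have "real (m choose i) * pw0 i B0 * pw0 (m - i) B0 = C * P powr B0"
    using i m by (simp add: pw0_eq_powr C_def P_def j_def[symmetric] powr_mult mult.assoc)
  also have "\<dots> \<le> C * (M / C) powr B0"
    using CP C1 P1 B0 by (intro mult_left_mono powr_mono2) (auto simp: field_simps)
  also have "\<dots> = M powr B0 / C powr (B0 - 1)"
    using C1 P1 CP by (simp add: powr_divide powr_diff field_simps)
  also have "\<dots> \<le> M powr B0 / C"
    using C1 B0 powr_mono[of 1 "B0 - 1" C] by (intro divide_left_mono) auto
  also have "\<dots> \<le> M powr B0 / real m"
    using Cm i by (intro divide_left_mono) auto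
  also have "M powr B0 = pw0 m B0" using i by (simp add: pw0_eq_powr M_def)
  finally show ?thesis .
qed

lemma pw0_convolution_le:
  assumes "B0 \<ge> 2"
  shows "(\<Sum>i\<le>m. real (m choose i) * pw0 i B0 * pw0 (m - i) B0) \<le> 3 * pw0 m B0"
proof (cases "m = 0")
  case True
  then show ?thesis by (simp add: pw0_def)
next
  case False
  have "(\<Sum>i\<in>{1..<m}. real (m choose i) * pw0 i B0 * pw0 (m - i) B0) \<le> (\<Sum>i\<in>{1..<m}. pw0 m B0 / real m)"
    using choose_mult_pw0_le[OF assms] by (intro sum_mono) auto
  also have "\<dots> = real (m - 1) * (pw0 m B0 / real m)" by simp
  also have "\<dots> \<le> real m * (pw0 m B0 / real m)"
    by (intro mult_right_mono) (auto simp: pw0_nonneg)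
  finally have interior: "(\<Sum>i\<in>{1..<m}. real (m choose i) * pw0 i B0 * pw0 (m - i) B0) \<le> pw0 m B0"
    using False by simp
  have "{..m} = insert 0 (insert m {1..<m})" using False by auto
  then have "(\<Sum>i\<le>m. real (m choose i) * pw0 i B0 * pw0 (m - i) B0) =
      2 * pw0 m B0 + (\<Sum>i\<in>{1..<m}. real (m choose i) * pw0 i B0 * pw0 (m - i) B0)"
    using False by (simp add: pw0_def)
  then show ?thesis using interior by simp
qed

definition fdiff_bounded :: "nat \<Rightarrow> nat \<Rightarrow> real \<Rightarrow> real \<Rightarrow> real \<Rightarrow> (nat \<Rightarrow> real) \<Rightarrow> bool" where
  "fdiff_bounded h T \<alpha> B0 K f \<longleftrightarrow> (\<forall>m t. m \<le> h \<longrightarrow> 1 \<le> t \<longrightarrow> t + m \<le> T \<longrightarrow>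
      \<bar>fdiff m f t\<bar> \<le> K * \<alpha> ^ m * pw0 m B0)"

lemma fdiff_bounded_vec_nth:
  assumes "\<And>m t. m \<le> h \<Longrightarrow> 1 \<le> t \<Longrightarrow> t + m \<le> T \<Longrightarrow> infnorm (fdiff m L t) \<le> K * \<alpha> ^ m * pw0 m B0"
  shows "fdiff_bounded h T \<alpha> B0 K (\<lambda>s. L s $ j)"
  unfolding fdiff_bounded_def fdiff_vec_nth
  using assms component_le_infnorm_cart order_trans by blast

lemma fdiff_bounded_one: "\<alpha> \<ge> 0 \<Longrightarrow> fdiff_bounded h T \<alpha> B0 1 (\<lambda>_. 1)"
  unfolding fdiff_bounded_def by (auto simp: fdiff_const pw0_def)

lemma fdiff_bounded_mult:
  assumes "K1 \<ge> 0" "K2 \<ge> 0" "\<alpha> \<ge> 0" "B0 \<ge> 2"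
    and f: "fdiff_bounded h T \<alpha> B0 K1 f" and g: "fdiff_bounded h T \<alpha> B0 K2 g"
  shows "fdiff_bounded h T \<alpha> B0 (3 * K1 * K2) (\<lambda>s. f s * g s)"
  unfolding fdiff_bounded_def
proof (intro allI impI)
  fix m t assume m: "m \<le> h" and t: "1 \<le> t" "t + m \<le> T"
  have "\<bar>fdiff m (\<lambda>s. f s * g s) t\<bar> \<le> (\<Sum>i\<le>m. real (m choose i) * \<bar>fdiff i f t\<bar> * \<bar>fdiff (m - i) g (t + i)\<bar>)"
    unfolding fdiff_mult by (rule order_trans[OF sum_abs]) (simp add: abs_mult mult.assoc)
  also have "\<dots> \<le> (\<Sum>i\<le>m. real (m choose i) * (K1 * \<alpha> ^ i * pw0 i B0) * (K2 * \<alpha> ^ (m - i) * pw0 (m - i) B0))"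
    using f g m t assms unfolding fdiff_bounded_def by (intro sum_mono mult_mono) (auto simp: pw0_nonneg)
  also have "\<dots> = K1 * K2 * \<alpha> ^ m * (\<Sum>i\<le>m. real (m choose i) * pw0 i B0 * pw0 (m - i) B0)"
    unfolding sum_distrib_left
    by (rule sum.cong[OF refl]) (simp add: power_add[symmetric] mult_ac)
  also have "\<dots> \<le> K1 * K2 * \<alpha> ^ m * (3 * pw0 m B0)"
    using assms by (intro mult_left_mono pw0_convolution_le) auto
  finally show "\<bar>fdiff m (\<lambda>s. f s * g s) t\<bar> \<le> 3 * K1 * K2 * \<alpha> ^ m * pw0 m B0"
    by (simp add: mult_ac)
qed

lemma fdiff_bounded_power_mult:
  assumes "K \<ge> 0" "S \<ge> 0" "\<alpha> \<ge> 0" "B0 \<ge> 2"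
    and f: "fdiff_bounded h T \<alpha> B0 K f" and g: "fdiff_bounded h T \<alpha> B0 S g"
  shows "fdiff_bounded h T \<alpha> B0 ((3 * K) ^ n * S) (\<lambda>s. f s ^ n * g s)"
proof (induction n)
  case 0
  then show ?case using g by simp
next
  case (Suc n)
  then show ?case
    using fdiff_bounded_mult[OF _ _ _ _ f Suc] assms by (simp add: mult_ac)
qed

lemma fdiff_bounded_monomial:
  assumes "K \<ge> 0" "\<alpha> \<ge> 0" "B0 \<ge> 2" and coord: "\<And>j. fdiff_bounded h T \<alpha> B0 K (\<lambda>s. L s $ j)"
  shows "fdiff_bounded h T \<alpha> B0 ((3 * K) ^ sum \<gamma> UNIV) (\<lambda>s. monomial (L s) \<gamma>)"
proof -
  have "fdiff_bounded h T \<alpha> B0 ((3 * K) ^ sum \<gamma> I) (\<lambda>s. \<Prod>i\<in>I. L s $ i ^ \<gamma> i)" if "finite I" for I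
    using that
  proof (induction I rule: finite_induct)
    case empty
    then show ?case using fdiff_bounded_one assms by simp
  next
    case (insert i I)
    then show ?case
      using fdiff_bounded_power_mult[OF _ _ _ _ coord insert.IH] assms by (simp add: power_add)
  qed
  then show ?thesis by (simp add: monomial_def)
qed

lemma sum_power_le_twice:
  fixes y :: real
  assumes "0 \<le> y" "y \<le> 1/2"
  shows "(\<Sum>k=1..N. y ^ k) \<le> 2 * y"
proof -
  have "(\<Sum>k=1..N. y ^ k) \<le> 2 * y - 2 * y ^ Suc N"
  proof (induction N)
    case 0
    then show ?case by simp
  next
    case (Suc N)
    have "2 * y ^ Suc (Suc N) \<le> y ^ Suc N"
      using assms mult_right_mono[of "2 * y" 1 "y ^ Suc N"] by simp
    then show ?case using Suc by simp
  qed
  then show ?thesis using assms zero_le_power[of y "Suc N"] by linarith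
qed

lemma finite_degree_le: "finite {\<gamma> :: 'n::finite \<Rightarrow> nat. sum \<gamma> UNIV \<le> N}"
proof (rule finite_subset)
  show "{\<gamma> :: 'n \<Rightarrow> nat. sum \<gamma> UNIV \<le> N} \<subseteq> PiE UNIV (\<lambda>_. {..N})"
  proof
    fix \<gamma> :: "'n \<Rightarrow> nat" assume "\<gamma> \<in> {\<gamma>. sum \<gamma> UNIV \<le> N}"
    then have "\<gamma> i \<le> N" for i using member_le_sum[of i UNIV \<gamma>] by auto
    then show "\<gamma> \<in> PiE UNIV (\<lambda>_. {..N})" by (auto simp: PiE_def extensional_def)
  qed
qed (intro finite_PiE; simp)

lemma QR_bounded_coeffs_nonneg:
  assumes "QR_bounded_coeffs a Q R"
  shows "0 \<le> Q" "0 \<le> Q * R"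
proof -
  have "0 \<le> Q * R ^ k" for k
  proof -
    have "0 \<le> (\<Sum>\<gamma>\<in>{\<gamma>. sum \<gamma> UNIV = k}. \<bar>a \<gamma>\<bar>)" by (rule sum_nonneg) simp
    also have "\<dots> \<le> Q * R ^ k" using assms unfolding QR_bounded_coeffs_def by blast
    finally show ?thesis .
  qed
  from this[of 0] this[of 1] show "0 \<le> Q" "0 \<le> Q * R" by simp_all
qed

lemma QR_bounded_coeffs_max_zero:
  assumes "QR_bounded_coeffs a Q R"
  shows "QR_bounded_coeffs a Q (max R 0)"
proof (cases "R \<ge> 0")
  case False
  then have "Q = 0"
    using QR_bounded_coeffs_nonneg[OF assms] by (simp add: zero_le_mult_iff)
  then show ?thesis using assms by (simp add: QR_bounded_coeffs_def)
qed (use assms in simp)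

lemma QR_bounded_coeffs_weighted_sum_le:
  fixes a :: "('n::finite \<Rightarrow> nat) \<Rightarrow> real"
  assumes bounded: "QR_bounded_coeffs a Q R" and "0 \<le> R" "0 \<le> x" "x * R \<le> 1/2" "finite F"
  shows "(\<Sum>\<gamma>\<in>F. \<bar>a \<gamma>\<bar> * (if sum \<gamma> UNIV = 0 then 0 else x ^ sum \<gamma> UNIV)) \<le> 2 * x * R * Q"
proof -
  define G where "G \<gamma> = \<bar>a \<gamma>\<bar> * (if sum \<gamma> UNIV = 0 then 0 else x ^ sum \<gamma> UNIV)" for \<gamma> :: "'n \<Rightarrow> nat"
  define N where "N = Max ((\<lambda>\<gamma>. sum \<gamma> UNIV) ` F \<union> {0})"
  define U where "U = {\<gamma> :: 'n \<Rightarrow> nat. sum \<gamma> UNIV \<le> N}"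
  have "finite U" unfolding U_def by (rule finite_degree_le)
  have "F \<subseteq> U" unfolding U_def N_def using \<open>finite F\<close> by (auto intro: Max_ge)
  have level: "sum G {\<gamma>\<in>U. sum \<gamma> UNIV = k} \<le> Q * (x * R) ^ k" if "1 \<le> k" "k \<le> N" for k
  proof -
    have "{\<gamma>\<in>U. sum \<gamma> UNIV = k} = {\<gamma>. sum \<gamma> UNIV = k}" using that by (auto simp: U_def)
    then have "sum G {\<gamma>\<in>U. sum \<gamma> UNIV = k} = x ^ k * (\<Sum>\<gamma>\<in>{\<gamma>. sum \<gamma> UNIV = k}. \<bar>a \<gamma>\<bar>)"
      using that by (simp add: G_def sum_distrib_left mult.commute)
    also have "\<dots> \<le> x ^ k * (Q * R ^ k)"
      using bounded \<open>0 \<le> x\<close> unfolding QR_bounded_coeffs_def by (intro mult_left_mono) auto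
    finally show ?thesis by (simp add: power_mult_distrib mult_ac)
  qed
  have "sum G F \<le> sum G U"
    using \<open>F \<subseteq> U\<close> \<open>finite U\<close> \<open>0 \<le> x\<close> by (intro sum_mono2) (auto simp: G_def)
  also have "\<dots> = (\<Sum>k\<le>N. sum G {\<gamma>\<in>U. sum \<gamma> UNIV = k})"
    by (rule sum.group[symmetric]) (use \<open>finite U\<close> in \<open>auto simp: U_def\<close>)
  also have "\<dots> = (\<Sum>k=1..N. sum G {\<gamma>\<in>U. sum \<gamma> UNIV = k})"
  proof -
    have "sum G {\<gamma>\<in>U. sum \<gamma> UNIV = 0} = 0" by (rule sum.neutral) (simp add: G_def)
    moreover have "{..N} = insert 0 {1..N}" by auto
    ultimately show ?thesis by simp
  qed
  also have "\<dots> \<le> Q * (\<Sum>k=1..N. (x * R) ^ k)"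
    unfolding sum_distrib_left using level by (intro sum_mono) auto
  also have "\<dots> \<le> Q * (2 * (x * R))"
    using QR_bounded_coeffs_nonneg(1)[OF bounded] assms
    by (intro mult_left_mono sum_power_le_twice) auto
  finally show ?thesis by (simp add: G_def mult_ac)
qed

lemma fdiff_monomial_abs_le:
  assumes "0 \<le> K" "0 \<le> \<alpha>" "B0 \<ge> 2" "h \<ge> 1" and coord: "\<And>j. fdiff_bounded h T \<alpha> B0 K (\<lambda>s. L s $ j)"
    and "1 \<le> t" "t + h \<le> T"
  shows "\<bar>fdiff h (\<lambda>s. monomial (L s) \<gamma>) t\<bar>
    \<le> (if sum \<gamma> UNIV = 0 then 0 else (3 * K) ^ sum \<gamma> UNIV) * (\<alpha> ^ h * pw0 h B0)"
proof (cases "sum \<gamma> UNIV = 0")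
  case True
  then have "monomial z \<gamma> = 1" for z by (simp add: monomial_def)
  then show ?thesis using True \<open>h \<ge> 1\<close> by (simp add: fdiff_const)
next
  case False
  then show ?thesis
    using fdiff_bounded_monomial[OF \<open>0 \<le> K\<close> \<open>0 \<le> \<alpha>\<close> \<open>B0 \<ge> 2\<close> coord] assms
    unfolding fdiff_bounded_def by (auto simp: mult.assoc)
qed

lemma fdiff_power_series_comp_le:
  fixes \<phi> :: "real^'n \<Rightarrow> real" and a :: "('n \<Rightarrow> nat) \<Rightarrow> real" and L :: "nat \<Rightarrow> real^'n"
  assumes bounded: "QR_bounded_coeffs a Q R" and "0 \<le> R"
    and series: "power_series_on \<phi> a \<nu>"
    and Lnu: "\<And>s. 1 \<le> s \<Longrightarrow> s \<le> T \<Longrightarrow> infnorm (L s) \<le> \<nu>"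
    and coord: "\<And>j. fdiff_bounded h T \<alpha> B0 K (\<lambda>s. L s $ j)"
    and "0 \<le> K" "6 * K * R \<le> 1" "0 \<le> \<alpha>" "B0 \<ge> 2" "h \<ge> 1" and t: "1 \<le> t" "t + h \<le> T"
  shows "\<bar>fdiff h (\<lambda>s. \<phi> (L s)) t\<bar> \<le> 6 * K * R * Q * \<alpha> ^ h * pw0 h B0"
proof -
  define f where "f = (\<lambda>\<gamma>. a \<gamma> * fdiff h (\<lambda>s. monomial (L s) \<gamma>) t)"
  define w where "w \<gamma> = \<bar>a \<gamma>\<bar> * (if sum \<gamma> UNIV = 0 then 0 else (3 * K) ^ sum \<gamma> UNIV)" for \<gamma> :: "'n \<Rightarrow> nat"
  have "((\<lambda>\<gamma>. fdiff h (\<lambda>s. a \<gamma> * monomial (L s) \<gamma>) t) has_sum fdiff h (\<lambda>s. \<phi> (L s)) t) UNIV"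
    using series Lnu t unfolding power_series_on_def by (intro fdiff_has_sum) auto
  then have "(f has_sum fdiff h (\<lambda>s. \<phi> (L s)) t) UNIV"
    by (simp add: f_def fdiff_cmult)
  moreover have "(\<Sum>\<gamma>\<in>F. \<bar>f \<gamma>\<bar>) \<le> 2 * (3 * K) * R * Q * (\<alpha> ^ h * pw0 h B0)" if "finite F" for F
  proof -
    have "\<bar>f \<gamma>\<bar> \<le> w \<gamma> * (\<alpha> ^ h * pw0 h B0)" for \<gamma>
      using fdiff_monomial_abs_le[OF \<open>0 \<le> K\<close> \<open>0 \<le> \<alpha>\<close> \<open>B0 \<ge> 2\<close> \<open>h \<ge> 1\<close> coord t]
      unfolding f_def w_def abs_mult mult.assoc by (rule mult_left_mono) simp
    then have "(\<Sum>\<gamma>\<in>F. \<bar>f \<gamma>\<bar>) \<le> sum w F * (\<alpha> ^ h * pw0 h B0)"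
      unfolding sum_distrib_right by (rule sum_mono)
    also have "\<dots> \<le> 2 * (3 * K) * R * Q * (\<alpha> ^ h * pw0 h B0)"
      unfolding w_def using assms that
      by (intro mult_right_mono QR_bounded_coeffs_weighted_sum_le) (auto simp: pw0_nonneg)
    finally show ?thesis .
  qed
  ultimately show ?thesis
    by (intro has_sum_abs_le_finite_sums) (auto simp: mult_ac)
qed

lemma four_le_exp_one_squared: "4 \<le> exp (1::real) ^ 2"
  using power_mono[of 2 "exp (1::real)" 2] exp_ge_add_one_self[of 1] by simp

lemma six_div_mult_max_zero_le_one:
  fixes B R :: real
  assumes "2 * exp 1 ^ 2 * R \<le> B" "0 \<le> B"
  shows "6 * (1 / B) * max R 0 \<le> 1"
proof -
  have "6 * max R 0 \<le> B"
  proof (cases "R \<le> 0")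
    case False
    then have "4 * R \<le> exp 1 ^ 2 * R"
      using four_le_exp_one_squared by (intro mult_right_mono) auto
    then show ?thesis using assms False by linarith
  qed (use assms in simp)
  then show ?thesis
    using \<open>0 \<le> B\<close> by (cases "B = 0") (auto simp: field_simps)
qed

lemma pw0_le_powr_Suc:
  assumes "h \<ge> 1" "0 \<le> C"
  shows "6 * C * pw0 h B0 \<le> 12 * exp 1 ^ 2 * C * real h powr (B0 * real h + 1)"
proof -
  have "6 * 1 \<le> 12 * exp 1 ^ 2 * real h"
    using assms four_le_exp_one_squared by (intro mult_mono) auto
  then have "6 * C * pw0 h B0 \<le> 12 * exp 1 ^ 2 * real h * C * pw0 h B0"
    using assms by (intro mult_right_mono) (auto simp: pw0_nonneg)
  also have "\<dots> = 12 * exp 1 ^ 2 * C * real h powr (B0 * real h + 1)"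
    using assms by (simp add: pw0_def powr_add)
  finally show ?thesis .
qed

theorem lemma4p4:
  fixes \<phi> :: "real^'n \<Rightarrow> real" and a :: "('n \<Rightarrow> nat) \<Rightarrow> real"
    and L :: "nat \<Rightarrow> real^'n" and h T :: nat
    and Q R \<nu> \<alpha> B1 B0 :: real
  assumes h: "h \<ge> 1"
    and bounded: "QR_bounded_coeffs a Q R"
    and series: "power_series_on \<phi> a \<nu>"
    and nu: "\<nu> > 0"
    and Lnu: "\<And>t. 1 \<le> t \<Longrightarrow> t \<le> T \<Longrightarrow> infnorm (L t) \<le> \<nu>"
    and alpha: "0 < \<alpha>" "\<alpha> < 1"
    and B1: "B1 \<ge> 2 * exp 1 ^ 2 * R"
    and B0: "B0 \<ge> 3"
    and D: "\<And>h' t. h' \<le> h \<Longrightarrow> 1 \<le> t \<Longrightarrow> t \<le> T - h' \<Longrightarrow>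
              infnorm (fdiff h' L t) \<le> (1 / B1) * \<alpha> ^ h' * pw0 h' B0"
  shows "\<forall>t. 1 \<le> t \<and> t \<le> T - h \<longrightarrow>
           \<bar>fdiff h (\<lambda>s. \<phi> (L s)) t\<bar>
             \<le> (12 * R * Q * exp 1 ^ 2 / B1) * \<alpha> ^ h * real h powr (B0 * real h + 1)"
proof (intro allI impI)
  fix t assume "1 \<le> t \<and> t \<le> T - h"
  then have t: "1 \<le> t" "t + h \<le> T" using h by auto
  have "0 \<le> (1 / B1) * \<alpha> ^ h * pw0 h B0"
    using infnorm_pos_le[of "fdiff h L t"] D[of h t] t by fastforce
  moreover have "0 < \<alpha> ^ h * pw0 h B0" using h alpha by (simp add: pw0_def)
  ultimately have "0 \<le> B1" by (simp add: zero_le_divide_iff)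
  have "Q * max R 0 = Q * R"
    using QR_bounded_coeffs_nonneg[OF bounded] by (auto simp: max_def zero_le_mult_iff)
  have "\<bar>fdiff h (\<lambda>s. \<phi> (L s)) t\<bar> \<le> 6 * (1 / B1) * max R 0 * Q * \<alpha> ^ h * pw0 h B0"
    using D B0 alpha h t six_div_mult_max_zero_le_one[OF B1 \<open>0 \<le> B1\<close>] \<open>0 \<le> B1\<close>
    by (intro fdiff_power_series_comp_le[OF QR_bounded_coeffs_max_zero[OF bounded] _ series Lnu]
        fdiff_bounded_vec_nth) auto
  also have "\<dots> = 6 * (R * Q / B1 * \<alpha> ^ h) * pw0 h B0"
    using \<open>Q * max R 0 = Q * R\<close> by (auto simp: field_simps)
  also have "\<dots> \<le> 12 * exp 1 ^ 2 * (R * Q / B1 * \<alpha> ^ h) * real h powr (B0 * real h + 1)"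
    using h \<open>0 \<le> B1\<close> QR_bounded_coeffs_nonneg[OF bounded] alpha
    by (intro pw0_le_powr_Suc) (auto simp: mult.commute)
  finally show "\<bar>fdiff h (\<lambda>s. \<phi> (L s)) t\<bar> \<le> (12 * R * Q * exp 1 ^ 2 / B1) * \<alpha> ^ h * real h powr (B0 * real h + 1)"
    by (simp add: mult_ac)
qed

end
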